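(* Let $K$ be a compact line, let $T:K\to\mathbb{R}$ be a nondecreasing right-continuous function, and let $h:K\to\mathbb{R}$ be $T$-integrable. Define $H(x)=\int_{0_K}^x h\,dT$ for $x\in K$. If $f:K\to\mathbb{R}$ is bounded, then $f$ is $H$-integrable if and only if $fh$ is $T$-integrable, and in this case $\int_K f\,dH=\int_K fh\,dT$.
   Context: A compact line is a compact space $K$ whose topology is the order topology of a linear order on $K$; $0_K$ and $1_K$ denote its minimum and maximum, and $0_K<1_K$. A tagged partition of $K$ is a finite family $P=\{([x_{i-1},x_i],t_i):i=1,\dots,n\}$ with $0_K=x_0\le\cdots\le x_n=1_K$ and $t_i\in[x_{i-1},x_i]$. A gauge assigns to each $x\in K$ an open interval $\delta(x)\ni x$; $P$ is $\delta$-fine if $[x_{i-1},x_i]\subset\delta(t_i)$ for all $i$. With $S(f,G,P)=f(0_K)G(0_K)+\sum_{i=1}^n f(t_i)(G(x_i)-G(x_{i-1}))$, $f$ is $G$-integrable if there is $A\in\mathbb{R}$ such that for every $\varepsilon>0$ some gauge $\delta$ gives $|S(f,G,P)-A|<\varepsilon$ for all $\delta$-fine $P$; $\int_K f\,dG=A$. For $x\in K$, $\int_{0_K}^x h\,dT$ denotes the integral, in this sense, of $h|_{[0_K,x]}$ with respect to $T|_{[0_K,x]}$ on the compact line $[0_K,x]$ (which exists whenever $h$ is $T$-integrable on $K$). *)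

theory Defs
  imports "HOL-Analysis.Analysis"
begin

text \<open>A compact line K is modelled as the universe of a type 'a of class
linorder_topology (topology = order topology) such that UNIV is compact and
UNIV = {a..b} with a < b.  Integrals over a subinterval [a,x] are defined
intrinsically on the compact line [a,x] (whose order topology coincides with
the subspace topology).\<close>

definition open_interval_in :: "'a::linorder \<Rightarrow> 'a \<Rightarrow> 'a set \<Rightarrow> bool" where
  "open_interval_in a b S \<longleftrightarrow>
     (\<exists>l u. l \<in> {a..b} \<and> u \<in> {a..b} \<and> S = {l<..<u})
   \<or> (\<exists>u. u \<in> {a..b} \<and> S = {a..<u})
   \<or> (\<exists>l. l \<in> {a..b} \<and> S = {l<..b})
   \<or> S = {a..b}"

definition gauge_on :: "'a::linorder \<Rightarrow> 'a \<Rightarrow> ('a \<Rightarrow> 'a set) \<Rightarrow> bool" where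
  "gauge_on a b \<delta> \<longleftrightarrow> (\<forall>t\<in>{a..b}. open_interval_in a b (\<delta> t) \<and> t \<in> \<delta> t)"

text \<open>Tagged partition {([xs (i-1), xs i], ts i) : i = 1..n} of [a,b].\<close>
definition tagged_partition :: "'a::linorder \<Rightarrow> 'a \<Rightarrow> nat \<Rightarrow> (nat \<Rightarrow> 'a) \<Rightarrow> (nat \<Rightarrow> 'a) \<Rightarrow> bool" where
  "tagged_partition a b n xs ts \<longleftrightarrow>
     xs 0 = a \<and> xs n = b \<and>
     (\<forall>i\<in>{1..n}. xs (i - 1) \<le> xs i \<and> xs (i - 1) \<le> ts i \<and> ts i \<le> xs i)"

definition delta_fine :: "('a::linorder \<Rightarrow> 'a set) \<Rightarrow> nat \<Rightarrow> (nat \<Rightarrow> 'a) \<Rightarrow> (nat \<Rightarrow> 'a) \<Rightarrow> bool" where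
  "delta_fine \<delta> n xs ts \<longleftrightarrow> (\<forall>i\<in>{1..n}. {xs (i - 1)..xs i} \<subseteq> \<delta> (ts i))"

definition RS_sum :: "'a \<Rightarrow> ('a \<Rightarrow> real) \<Rightarrow> ('a \<Rightarrow> real) \<Rightarrow> nat \<Rightarrow> (nat \<Rightarrow> 'a) \<Rightarrow> (nat \<Rightarrow> 'a) \<Rightarrow> real" where
  "RS_sum a f G n xs ts = f a * G a + (\<Sum>i=1..n. f (ts i) * (G (xs i) - G (xs (i - 1))))"

definition has_RS_integral :: "'a::linorder \<Rightarrow> 'a \<Rightarrow> ('a \<Rightarrow> real) \<Rightarrow> ('a \<Rightarrow> real) \<Rightarrow> real \<Rightarrow> bool" where
  "has_RS_integral a b f G A \<longleftrightarrow>
     (\<forall>\<epsilon>>0. \<exists>\<delta>. gauge_on a b \<delta> \<and>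
        (\<forall>n xs ts. tagged_partition a b n xs ts \<and> delta_fine \<delta> n xs ts \<longrightarrow>
            \<bar>RS_sum a f G n xs ts - A\<bar> < \<epsilon>))"

definition RS_integrable :: "'a::linorder \<Rightarrow> 'a \<Rightarrow> ('a \<Rightarrow> real) \<Rightarrow> ('a \<Rightarrow> real) \<Rightarrow> bool" where
  "RS_integrable a b f G \<longleftrightarrow> (\<exists>A. has_RS_integral a b f G A)"

definition RS_integral :: "'a::linorder \<Rightarrow> 'a \<Rightarrow> ('a \<Rightarrow> real) \<Rightarrow> ('a \<Rightarrow> real) \<Rightarrow> real" where
  "RS_integral a b f G = (THE A. has_RS_integral a b f G A)"

end

theory Submission
  imports Defs
begin

(*
  Riemann-Stieltjes sums over delta-fine tagged partitions are organised as a filter, so that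
  integrability means convergence of the sums along it. On a compact line without gaps, Cousin's
  lemma makes this filter proper; this gives uniqueness of the integral, a Cauchy criterion and
  hence integrability of h on every [a, x], so H is well defined.

  The core is the Saks-Henstock lemma: if the sums of h against T are within eps of
  H b - H a for all delta-fine partitions, then along any delta-fine partition the cell errors
  h t_i (T x_i - T x_(i-1)) - (H x_i - H x_(i-1)) have absolute sum at most 2 eps. Weighting
  them by f with |f| <= M shows that the sums of f against H and of f h against T differ by at
  most 2 M eps, so they converge together.

  If the line has a gap (s < u with nothing in between), a gauge separating [a, s] from [u, b]
  admits no fine partition, so with these definitions every function is integrable against every
  integrator with every value, and both sides of the statement agree trivially.
*)

section \<open>Relative neighbourhoods\<close>

(* Unlike the open intervals required by gauge_on, relative neighbourhoods are closed under
   intersection and restriction to subintervals; both kinds of gauge define the same integral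
   (ex_gauge_on_iff_ex_nbhd_gauge). *)
definition rel_nbhd :: "'a::linorder \<Rightarrow> 'a \<Rightarrow> 'a \<Rightarrow> 'a set \<Rightarrow> bool" where
  "rel_nbhd c d t S \<longleftrightarrow> (\<exists>l u. (l < t \<or> t = c) \<and> (t < u \<or> t = d) \<and>
     {x \<in> {c..d}. (l < x \<or> t = c) \<and> (x < u \<or> t = d)} \<subseteq> S)"

definition nbhd_gauge :: "'a::linorder \<Rightarrow> 'a \<Rightarrow> ('a \<Rightarrow> 'a set) \<Rightarrow> bool" where
  "nbhd_gauge c d \<delta> \<longleftrightarrow> (\<forall>t\<in>{c..d}. rel_nbhd c d t (\<delta> t))"

lemma rel_nbhd_Int:
  assumes "rel_nbhd c d t S" "rel_nbhd c d t S'"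
  shows "rel_nbhd c d t (S \<inter> S')"
proof -
  obtain l u l' u' where lu: "l < t \<or> t = c" "t < u \<or> t = d" "l' < t \<or> t = c" "t < u' \<or> t = d"
    and "{x \<in> {c..d}. (l < x \<or> t = c) \<and> (x < u \<or> t = d)} \<subseteq> S"
    and "{x \<in> {c..d}. (l' < x \<or> t = c) \<and> (x < u' \<or> t = d)} \<subseteq> S'"
    using assms unfolding rel_nbhd_def by blast
  then have "{x \<in> {c..d}. (max l l' < x \<or> t = c) \<and> (x < min u u' \<or> t = d)} \<subseteq> S \<inter> S'"
    by (auto simp only: max_less_iff_conj min_less_iff_conj mem_Collect_eq)
  moreover have "max l l' < t \<or> t = c" "t < min u u' \<or> t = d"
    using lu by auto
  ultimately show ?thesis
    unfolding rel_nbhd_def by blast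
qed

lemma rel_nbhd_subinterval:
  assumes "rel_nbhd c d t S" "c \<le> c'" "c' \<le> t" "t \<le> d'" "d' \<le> d"
  shows "rel_nbhd c' d' t S"
proof -
  obtain l u where lu: "l < t \<or> t = c" "t < u \<or> t = d"
    and sub: "{x \<in> {c..d}. (l < x \<or> t = c) \<and> (x < u \<or> t = d)} \<subseteq> S"
    using assms(1) unfolding rel_nbhd_def by blast
  have "{x \<in> {c'..d'}. (l < x \<or> t = c') \<and> (x < u \<or> t = d')}
      \<subseteq> {x \<in> {c..d}. (l < x \<or> t = c) \<and> (x < u \<or> t = d)}"
  proof (intro subsetI CollectI conjI)
    fix x assume x: "x \<in> {x \<in> {c'..d'}. (l < x \<or> t = c') \<and> (x < u \<or> t = d')}"
    then show "x \<in> {c..d}" using assms(2,5) by auto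
    show "l < x \<or> t = c"
      using x lu(1) assms(2) by (cases "l < x") (auto simp: not_less)
    show "x < u \<or> t = d"
      using x lu(2) assms(5) by (cases "x < u") (auto simp: not_less)
  qed
  moreover have "l < t \<or> t = c'" "t < u \<or> t = d'"
    using lu assms(2-5) by auto
  ultimately show ?thesis
    unfolding rel_nbhd_def using sub by blast
qed

lemma nbhd_gauge_Int:
  "nbhd_gauge c d \<delta> \<Longrightarrow> nbhd_gauge c d \<delta>' \<Longrightarrow> nbhd_gauge c d (\<lambda>t. \<delta> t \<inter> \<delta>' t)"
  unfolding nbhd_gauge_def by (simp add: rel_nbhd_Int)

lemma nbhd_gauge_subinterval:
  "nbhd_gauge c d \<delta> \<Longrightarrow> c \<le> c' \<Longrightarrow> d' \<le> d \<Longrightarrow> nbhd_gauge c' d' \<delta>"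
  unfolding nbhd_gauge_def by (meson atLeastAtMost_iff order_trans rel_nbhd_subinterval)

lemma rel_nbhd_open_interval_in:
  "open_interval_in c d S \<Longrightarrow> t \<in> S \<Longrightarrow> rel_nbhd c d t S"
  unfolding open_interval_in_def rel_nbhd_def
  apply (elim disjE exE conjE)
  subgoal for l u by (intro exI[of _ l] exI[of _ u]) auto
  subgoal for u by (intro exI[of _ c] exI[of _ u]) auto
  subgoal for l by (intro exI[of _ l] exI[of _ d]) auto
  subgoal by (intro exI[of _ c] exI[of _ d]) auto
  done

lemma rel_nbhd_imp_open_interval_in:
  assumes "rel_nbhd c d t S" "t \<in> {c..d}"
  obtains G where "open_interval_in c d G" "t \<in> G" "G \<subseteq> S"
proof -
  obtain l u where lu: "l < t \<or> t = c" "t < u \<or> t = d"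
    and sub: "{x \<in> {c..d}. (l < x \<or> t = c) \<and> (x < u \<or> t = d)} \<subseteq> S"
    using assms(1) unfolding rel_nbhd_def by blast
  have l: "max l c \<in> {c..d}" if "t \<noteq> c"
    using that lu(1) assms(2) by auto
  have u: "min u d \<in> {c..d}" if "t \<noteq> d"
    using that lu(2) assms(2) by auto
  consider "t = c" "t = d" | "t = c" "t \<noteq> d" | "t \<noteq> c" "t = d" | "t \<noteq> c" "t \<noteq> d"
    by blast
  then show ?thesis
  proof cases
    case 1
    show ?thesis
      by (rule that[of "{c..d}"]) (use 1 sub assms(2) in \<open>auto simp: open_interval_in_def\<close>)
  next
    case 2
    show ?thesis
    proof (rule that)
      show "open_interval_in c d {c..<min u d}"
        using u 2 unfolding open_interval_in_def by blast
    qed (use 2 lu sub assms(2) in \<open>auto simp: subset_eq less_imp_le\<close>)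
  next
    case 3
    show ?thesis
    proof (rule that)
      show "open_interval_in c d {max l c<..d}"
        using l 3 unfolding open_interval_in_def by blast
    qed (use 3 lu sub assms(2) in \<open>auto simp: subset_eq less_imp_le\<close>)
  next
    case 4
    show ?thesis
    proof (rule that)
      show "open_interval_in c d {max l c<..<min u d}"
        using l u 4 unfolding open_interval_in_def by blast
    qed (use 4 lu sub assms(2) in \<open>auto simp: subset_eq less_imp_le\<close>)
  qed
qed

type_synonym 'a tagged_points = "nat \<times> (nat \<Rightarrow> 'a) \<times> (nat \<Rightarrow> 'a)"

definition fine_partition :: "'a::linorder \<Rightarrow> 'a \<Rightarrow> ('a \<Rightarrow> 'a set) \<Rightarrow> 'a tagged_points \<Rightarrow> bool" where
  "fine_partition c d \<delta> = (\<lambda>(n, xs, ts). tagged_partition c d n xs ts \<and> delta_fine \<delta> n xs ts)"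

definition cell_sum :: "('a \<Rightarrow> real) \<Rightarrow> ('a \<Rightarrow> real) \<Rightarrow> 'a tagged_points \<Rightarrow> real" where
  "cell_sum f G = (\<lambda>(n, xs, ts). \<Sum>i=1..n. f (ts i) * (G (xs i) - G (xs (i - 1))))"

definition point_partition :: "'a \<Rightarrow> 'a tagged_points" where
  "point_partition c = (0, \<lambda>_. c, \<lambda>_. c)"

definition single_cell :: "'a \<Rightarrow> 'a \<Rightarrow> 'a \<Rightarrow> 'a tagged_points" where
  "single_cell y z t = (1, \<lambda>i. if i = 0 then y else z, \<lambda>_. t)"

definition join_partitions :: "'a tagged_points \<Rightarrow> 'a tagged_points \<Rightarrow> 'a tagged_points" where
  "join_partitions = (\<lambda>(n, xs, ts) (m, ys, ss).
     (n + m, \<lambda>i. if i \<le> n then xs i else ys (i - n), \<lambda>i. if i \<le> n then ts i else ss (i - n)))"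

lemma fine_partition_iff:
  "fine_partition c d \<delta> (n, xs, ts) \<longleftrightarrow> tagged_partition c d n xs ts \<and> delta_fine \<delta> n xs ts"
  by (simp add: fine_partition_def)

lemma cell_sum_eq [simp]:
  "cell_sum f G (n, xs, ts) = (\<Sum>i=1..n. f (ts i) * (G (xs i) - G (xs (i - 1))))"
  by (simp add: cell_sum_def)

lemma RS_sum_eq_cell_sum: "RS_sum c f G n xs ts = f c * G c + cell_sum f G (n, xs, ts)"
  by (simp add: RS_sum_def)

lemma fine_partition_Int_gauge:
  "fine_partition c d (\<lambda>t. \<delta> t \<inter> \<delta>' t) p \<longleftrightarrow> fine_partition c d \<delta> p \<and> fine_partition c d \<delta>' p"
  by (cases p) (auto simp: fine_partition_iff delta_fine_def)

lemma tagged_partition_mono: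
  assumes "tagged_partition c d n xs ts" "j \<le> k" "k \<le> n"
  shows "xs j \<le> xs k"
  using assms(2,3)
proof (induction k)
  case (Suc k)
  have "xs k \<le> xs (Suc k)"
    using assms(1) Suc.prems(2) unfolding tagged_partition_def
    by (metis atLeastAtMost_iff diff_Suc_1 le_add1 plus_1_eq_Suc)
  with Suc show ?case
    by (cases "j = Suc k") auto
qed simp

lemma tagged_partition_points:
  "tagged_partition c d n xs ts \<Longrightarrow> i \<le> n \<Longrightarrow> xs i \<in> {c..d}"
  using tagged_partition_mono[of c d n xs ts 0 i] tagged_partition_mono[of c d n xs ts i n]
  unfolding tagged_partition_def by auto

lemma tagged_partition_tags:
  "tagged_partition c d n xs ts \<Longrightarrow> i \<in> {1..n} \<Longrightarrow> ts i \<in> {c..d}"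
  using tagged_partition_points[of c d n xs ts i] tagged_partition_points[of c d n xs ts "i - 1"]
  unfolding tagged_partition_def by (meson atLeastAtMost_iff diff_le_self order_trans)

lemma fine_partition_point_partition: "fine_partition c c \<delta> (point_partition c)"
  by (simp add: point_partition_def fine_partition_iff tagged_partition_def delta_fine_def)

lemma cell_sum_point_partition: "cell_sum f G (point_partition c) = 0"
  by (simp add: point_partition_def)

lemma fine_partition_single_cell:
  "y \<le> t \<Longrightarrow> t \<le> z \<Longrightarrow> {y..z} \<subseteq> \<delta> t \<Longrightarrow> fine_partition y z \<delta> (single_cell y z t)"
  by (simp add: single_cell_def fine_partition_iff tagged_partition_def delta_fine_def)

lemma cell_sum_single_cell: "cell_sum f G (single_cell y z t) = f t * (G z - G y)"
  by (simp add: single_cell_def)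

lemma ball_atLeast1_atMost_add:
  fixes n m :: nat
  shows "(\<forall>i\<in>{1..n+m}. P i) \<longleftrightarrow> (\<forall>i\<in>{1..n}. P i) \<and> (\<forall>i\<in>{1..m}. P (n + i))"
proof -
  have split: "{1..n+m} = {1..n} \<union> (\<lambda>i. n + i) ` {1..m}"
  proof (intro equalityI subsetI)
    fix i assume "i \<in> {1..n+m}"
    then show "i \<in> {1..n} \<union> (\<lambda>i. n + i) ` {1..m}"
      by (cases "i \<le> n") (auto intro!: image_eqI[of _ _ "i - n"])
  qed auto
  show ?thesis
    unfolding split ball_Un by blast
qed

lemma sum_atLeast1_atMost_add:
  fixes n m :: nat
  shows "(\<Sum>i=1..n+m. F i) = (\<Sum>i=1..n. F i) + (\<Sum>i=1..m. F (n + i))"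
  using sum.ub_add_nat[of 1 n F m] sum.shift_bounds_cl_nat_ivl[of F 1 n m]
  by (simp add: add.commute)

lemma join_partitions_cells:
  assumes "xs n = ys 0" "join_partitions (n, xs, ts) (m, ys, ss) = (N, xs', ts')"
  shows "N = n + m" "xs' 0 = xs 0" "xs' N = ys m"
    and "(\<forall>i\<in>{1..N}. C (xs' (i - 1)) (xs' i) (ts' i)) \<longleftrightarrow>
           (\<forall>i\<in>{1..n}. C (xs (i - 1)) (xs i) (ts i)) \<and> (\<forall>i\<in>{1..m}. C (ys (i - 1)) (ys i) (ss i))"
    and "(\<Sum>i=1..N. F (xs' (i - 1)) (xs' i) (ts' i)) =
           (\<Sum>i=1..n. F (xs (i - 1)) (xs i) (ts i)) + (\<Sum>i=1..m. F (ys (i - 1)) (ys i) (ss i))"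
proof -
  have xs': "xs' = (\<lambda>i. if i \<le> n then xs i else ys (i - n))"
    and ts': "ts' = (\<lambda>i. if i \<le> n then ts i else ss (i - n))" and N: "N = n + m"
    using assms(2) by (auto simp: join_partitions_def)
  then show "N = n + m" "xs' 0 = xs 0" "xs' N = ys m"
    using assms(1) by auto
  have lower: "xs' (i - 1) = xs (i - 1)" "xs' i = xs i" "ts' i = ts i" if "i \<in> {1..n}" for i
    using that by (auto simp: xs' ts')
  have upper: "xs' (n + i - 1) = ys (i - 1)" "xs' (n + i) = ys i" "ts' (n + i) = ss i"
    if "i \<in> {1..m}" for i
    using that assms(1) by (cases "i = 1"; auto simp: xs' ts')+
  show "(\<forall>i\<in>{1..N}. C (xs' (i - 1)) (xs' i) (ts' i)) \<longleftrightarrow>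
      (\<forall>i\<in>{1..n}. C (xs (i - 1)) (xs i) (ts i)) \<and> (\<forall>i\<in>{1..m}. C (ys (i - 1)) (ys i) (ss i))"
    unfolding N ball_atLeast1_atMost_add
    by (intro arg_cong2[where f = "(\<and>)"] ball_cong refl) (simp_all only: lower upper)
  show "(\<Sum>i=1..N. F (xs' (i - 1)) (xs' i) (ts' i)) =
      (\<Sum>i=1..n. F (xs (i - 1)) (xs i) (ts i)) + (\<Sum>i=1..m. F (ys (i - 1)) (ys i) (ss i))"
    unfolding N sum_atLeast1_atMost_add
    by (intro arg_cong2[where f = "(+)"] sum.cong refl) (simp_all only: lower upper)
qed

lemma fine_partition_join:
  assumes "fine_partition c y \<delta> p" "fine_partition y z \<delta> q"
  shows "fine_partition c z \<delta> (join_partitions p q)"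
proof -
  obtain n xs ts m ys ss N xs' ts' where
    pq: "p = (n, xs, ts)" "q = (m, ys, ss)" "join_partitions p q = (N, xs', ts')"
    by (metis prod_cases3)
  have P: "tagged_partition c y n xs ts" "delta_fine \<delta> n xs ts"
    and Q: "tagged_partition y z m ys ss" "delta_fine \<delta> m ys ss"
    using assms pq by (auto simp: fine_partition_iff)
  then have "xs n = ys 0"
    by (simp add: tagged_partition_def)
  note cells = join_partitions_cells[OF this pq(3)[unfolded pq(1,2)]]
  have "tagged_partition c z N xs' ts'"
    using P(1) Q(1) unfolding tagged_partition_def cells(2,3)
      cells(4)[where C = "\<lambda>x y t. x \<le> y \<and> x \<le> t \<and> t \<le> y"] by simp
  moreover have "delta_fine \<delta> N xs' ts'"
    using P(2) Q(2) unfolding delta_fine_def cells(4)[where C = "\<lambda>x y t. {x..y} \<subseteq> \<delta> t"] by simp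
  ultimately show ?thesis
    using pq(3) by (simp add: fine_partition_iff)
qed

lemma cell_sum_join:
  assumes "fine_partition c y \<delta> p" "fine_partition y z \<delta>' q"
  shows "cell_sum f G (join_partitions p q) = cell_sum f G p + cell_sum f G q"
proof -
  obtain n xs ts m ys ss N xs' ts' where
    pq: "p = (n, xs, ts)" "q = (m, ys, ss)" "join_partitions p q = (N, xs', ts')"
    by (metis prod_cases3)
  then have "xs n = ys 0"
    using assms by (simp add: fine_partition_iff tagged_partition_def)
  note cells = join_partitions_cells[OF this pq(3)[unfolded pq(1,2)]]
  show ?thesis
    unfolding pq(3) unfolding pq(1,2) cell_sum_eq cells(5)[where F = "\<lambda>x y t. f t * (G y - G x)"] ..
qed

lemma fine_partition_extend:
  assumes "fine_partition c y \<delta> p" "y \<le> t" "t \<le> z" "{y..z} \<subseteq> \<delta> t"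
  shows "fine_partition c z \<delta> (join_partitions p (single_cell y z t))"
  using assms by (simp add: fine_partition_join fine_partition_single_cell)

section \<open>Cousin's lemma and the filter of fine partitions\<close>

lemma rel_nbhd_left_interval:
  assumes "rel_nbhd c d s S" "s \<in> {c..d}" "c < s"
  obtains l where "l < s" "\<And>y. l < y \<Longrightarrow> c \<le> y \<Longrightarrow> {y..s} \<subseteq> S"
proof -
  obtain l u where lu: "l < s" "s < u \<or> s = d"
    and sub: "{x \<in> {c..d}. (l < x \<or> s = c) \<and> (x < u \<or> s = d)} \<subseteq> S"
    using assms unfolding rel_nbhd_def by auto
  have "{y..s} \<subseteq> S" if "l < y" "c \<le> y" for y
  proof
    fix x
    assume "x \<in> {y..s}"
    then have "x \<in> {c..d}" "l < x" "x < u \<or> s = d"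
      using that lu(2) assms(2) by (auto intro: order_trans less_le_trans le_less_trans)
    then show "x \<in> S"
      using sub by blast
  qed
  with lu(1) show ?thesis
    using that by blast
qed

lemma rel_nbhd_right_interval:
  fixes c d s :: "'a::linorder"
  assumes dense: "\<And>x y::'a. x < y \<Longrightarrow> \<exists>z. x < z \<and> z < y"
    and "rel_nbhd c d s S" "s \<in> {c..d}" "s < d"
  obtains z where "s < z" "z \<le> d" "{s..z} \<subseteq> S"
proof -
  obtain l u where lu: "l < s \<or> s = c" "s < u"
    and sub: "{x \<in> {c..d}. (l < x \<or> s = c) \<and> (x < u \<or> s = d)} \<subseteq> S"
    using assms(2,4) unfolding rel_nbhd_def by auto
  obtain z where z: "s < z" "z \<le> d" "\<And>x. x \<le> z \<Longrightarrow> x < u"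
  proof (cases "u \<le> d")
    case True
    then obtain z where "s < z" "z < u"
      using dense \<open>s < u\<close> by blast
    then show ?thesis
      using that[of z] True by (auto intro: le_less_trans)
  next
    case False
    then show ?thesis
      using that[of d] \<open>s < d\<close> by (auto intro: le_less_trans)
  qed
  moreover have "{s..z} \<subseteq> S"
  proof
    fix x
    assume "x \<in> {s..z}"
    then have "x \<in> {c..d}" "l < x \<or> s = c" "x < u"
      using assms(3) z lu(1) by (auto intro: order_trans less_le_trans)
    then show "x \<in> S"
      using sub by blast
  qed
  ultimately show ?thesis
    using that by blast
qed

lemma fine_partition_exists:
  fixes c d :: "'a::linorder_topology"
  assumes compact: "compact (UNIV :: 'a set)"
    and dense: "\<And>x y::'a. x < y \<Longrightarrow> \<exists>z. x < z \<and> z < y"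
    and "c \<le> d" and \<delta>: "nbhd_gauge c d \<delta>"
  obtains p where "fine_partition c d \<delta> p"
proof -
  define S where "S = {y \<in> {c..d}. \<exists>p. fine_partition c y \<delta> p}"
  have "c \<in> S"
    using \<open>c \<le> d\<close> fine_partition_point_partition unfolding S_def
    by (auto simp del: split_paired_Ex)
  have extend: "z \<in> S" if "y \<in> S" "y \<le> t" "t \<le> z" "z \<le> d" "{y..z} \<subseteq> \<delta> t" for y t z
  proof -
    obtain p where "c \<le> y" "fine_partition c y \<delta> p"
      using \<open>y \<in> S\<close> unfolding S_def by auto
    then show ?thesis
      using fine_partition_extend[of c y \<delta> p t z] that unfolding S_def
      by (auto simp del: split_paired_Ex intro: order_trans)
  qed
  have "compact (closure S)"
    using compact_Int_closed[OF compact closed_closure] by simp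
  moreover have "closure S \<noteq> {}"
    using \<open>c \<in> S\<close> closure_subset by blast
  ultimately obtain s where s: "s \<in> closure S" and s_max: "\<And>y. y \<in> closure S \<Longrightarrow> y \<le> s"
    using compact_attains_sup by metis
  have "closure S \<subseteq> {c..d}"
    by (rule closure_minimal) (auto simp: S_def)
  with s have s_cd: "s \<in> {c..d}"
    by auto
  then have nbhd: "rel_nbhd c d s (\<delta> s)"
    using \<delta> unfolding nbhd_gauge_def by blast
  have "s \<in> S"
  proof (cases "s = c")
    case False
    then have "c < s"
      using s_cd by (auto simp: le_less)
    then obtain l where "l < s" and left: "\<And>y. l < y \<Longrightarrow> c \<le> y \<Longrightarrow> {y..s} \<subseteq> \<delta> s"
      using rel_nbhd_left_interval[OF nbhd s_cd] by blast
    then obtain y where y: "y \<in> S" "l < y"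
      using s unfolding closure_iff_nhds_not_empty
      by (metis Int_emptyI greaterThan_iff open_greaterThan order_refl)
    moreover have "y \<le> s"
      using s_max closure_subset y(1) by blast
    moreover have "c \<le> y"
      using y(1) unfolding S_def by auto
    ultimately show ?thesis
      using extend[OF y(1) _ order_refl _ left] s_cd by auto
  qed (use \<open>c \<in> S\<close> in simp)
  moreover have "s = d"
  proof (rule ccontr)
    assume "s \<noteq> d"
    then have "s < d"
      using s_cd by (auto simp: le_less)
    then obtain z where "s < z" "z \<le> d" "{s..z} \<subseteq> \<delta> s"
      using rel_nbhd_right_interval[OF dense nbhd s_cd] by blast
    then have "z \<in> S"
      using extend[OF \<open>s \<in> S\<close> order_refl] by auto
    then show False
      using s_max closure_subset \<open>s < z\<close> by (auto simp: not_le[symmetric])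
  qed
  ultimately show ?thesis
    using that unfolding S_def by blast
qed

(* The analogue of division_filter: integrals are limits of cell sums along this filter. *)
definition fine_partitions :: "'a::linorder \<Rightarrow> 'a \<Rightarrow> 'a tagged_points filter" where
  "fine_partitions c d = (INF \<delta>\<in>{\<delta>. nbhd_gauge c d \<delta>}. principal {p. fine_partition c d \<delta> p})"

lemma nbhd_gauge_UNIV: "nbhd_gauge c d (\<lambda>_. UNIV)"
  unfolding nbhd_gauge_def rel_nbhd_def by (metis atLeastAtMost_iff order_le_less subset_UNIV)

lemma eventually_fine_partitions:
  "eventually P (fine_partitions c d) \<longleftrightarrow>
     (\<exists>\<delta>. nbhd_gauge c d \<delta> \<and> (\<forall>p. fine_partition c d \<delta> p \<longrightarrow> P p))"
  unfolding fine_partitions_def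
proof (subst eventually_INF_base)
  show "{\<delta>. nbhd_gauge c d \<delta>} \<noteq> {}"
    using nbhd_gauge_UNIV by blast
  show "\<exists>\<delta>''\<in>{\<delta>. nbhd_gauge c d \<delta>}. principal {p. fine_partition c d \<delta>'' p} \<le>
      inf (principal {p. fine_partition c d \<delta> p}) (principal {p. fine_partition c d \<delta>' p})"
    if "\<delta> \<in> {\<delta>. nbhd_gauge c d \<delta>}" "\<delta>' \<in> {\<delta>. nbhd_gauge c d \<delta>}" for \<delta> \<delta>'
    using that nbhd_gauge_Int[of c d \<delta> \<delta>'] by (auto simp: fine_partition_Int_gauge)
qed (auto simp: eventually_principal)

lemma fine_partitions_neq_bot:
  fixes c d :: "'a::linorder_topology"
  assumes "compact (UNIV :: 'a set)" "\<And>x y::'a. x < y \<Longrightarrow> \<exists>z. x < z \<and> z < y" "c \<le> d"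
  shows "fine_partitions c d \<noteq> bot"
  unfolding trivial_limit_def eventually_fine_partitions
  using fine_partition_exists[OF assms] by blast

lemma tendsto_fine_partitions_iff:
  fixes g :: "'a::linorder tagged_points \<Rightarrow> real"
  shows "(g \<longlongrightarrow> L) (fine_partitions c d) \<longleftrightarrow>
     (\<forall>e>0. \<exists>\<delta>. nbhd_gauge c d \<delta> \<and> (\<forall>p. fine_partition c d \<delta> p \<longrightarrow> \<bar>g p - L\<bar> < e))"
  unfolding tendsto_iff eventually_fine_partitions dist_real_def ..

lemma ex_gauge_on_iff_ex_nbhd_gauge:
  "(\<exists>\<delta>. gauge_on c d \<delta> \<and> (\<forall>p. fine_partition c d \<delta> p \<longrightarrow> P p)) \<longleftrightarrow>
   (\<exists>\<delta>. nbhd_gauge c d \<delta> \<and> (\<forall>p. fine_partition c d \<delta> p \<longrightarrow> P p))"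
proof
  assume "\<exists>\<delta>. gauge_on c d \<delta> \<and> (\<forall>p. fine_partition c d \<delta> p \<longrightarrow> P p)"
  moreover have "nbhd_gauge c d \<delta>" if "gauge_on c d \<delta>" for \<delta>
    using that rel_nbhd_open_interval_in unfolding gauge_on_def nbhd_gauge_def by blast
  ultimately show "\<exists>\<delta>. nbhd_gauge c d \<delta> \<and> (\<forall>p. fine_partition c d \<delta> p \<longrightarrow> P p)"
    by blast
next
  assume "\<exists>\<delta>. nbhd_gauge c d \<delta> \<and> (\<forall>p. fine_partition c d \<delta> p \<longrightarrow> P p)"
  then obtain \<delta> where \<delta>: "nbhd_gauge c d \<delta>" and P: "\<And>p. fine_partition c d \<delta> p \<Longrightarrow> P p"
    by blast
  have "\<forall>t\<in>{c..d}. \<exists>G. open_interval_in c d G \<and> t \<in> G \<and> G \<subseteq> \<delta> t"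
    using \<delta> rel_nbhd_imp_open_interval_in unfolding nbhd_gauge_def by metis
  then obtain \<delta>' where \<delta>': "\<And>t. t \<in> {c..d} \<Longrightarrow> open_interval_in c d (\<delta>' t) \<and> t \<in> \<delta>' t \<and> \<delta>' t \<subseteq> \<delta> t"
    by metis
  have "fine_partition c d \<delta> p" if "fine_partition c d \<delta>' p" for p
    using that \<delta>' tagged_partition_tags unfolding fine_partition_def delta_fine_def by fast
  moreover have "gauge_on c d \<delta>'"
    using \<delta>' unfolding gauge_on_def by blast
  ultimately show "\<exists>\<delta>. gauge_on c d \<delta> \<and> (\<forall>p. fine_partition c d \<delta> p \<longrightarrow> P p)"
    using P by blast
qed

lemma has_RS_integral_iff_tendsto:
  "has_RS_integral c d f G A \<longleftrightarrow> (cell_sum f G \<longlongrightarrow> A - f c * G c) (fine_partitions c d)"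
proof -
  have dist: "\<bar>RS_sum c f G n xs ts - A\<bar> = dist (cell_sum f G (n, xs, ts)) (A - f c * G c)"
    for n xs ts
    by (simp add: RS_sum_eq_cell_sum dist_real_def)
  show ?thesis
    unfolding tendsto_iff eventually_fine_partitions ex_gauge_on_iff_ex_nbhd_gauge[symmetric]
    unfolding has_RS_integral_def split_paired_All fine_partition_iff dist ..
qed

lemma RS_integral_eqI:
  fixes c d :: "'a::linorder_topology"
  assumes "compact (UNIV :: 'a set)" "\<And>x y::'a. x < y \<Longrightarrow> \<exists>z. x < z \<and> z < y" "c \<le> d"
    and "has_RS_integral c d f G A"
  shows "RS_integral c d f G = A"
  unfolding RS_integral_def
proof (rule the_equality)
  show "B = A" if "has_RS_integral c d f G B" for B
    using tendsto_unique[OF fine_partitions_neq_bot[OF assms(1-3)]] that assms(4)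
    unfolding has_RS_integral_iff_tendsto by fastforce
qed (fact assms(4))

lemma has_RS_integral_point: "has_RS_integral c c f G (f c * G c)"
proof -
  have "cell_sum f G p = 0" if "fine_partition c c (\<lambda>_. UNIV) p" for p
  proof -
    obtain n xs ts where p: "p = (n, xs, ts)"
      by (cases p)
    then have P: "tagged_partition c c n xs ts"
      using that by (simp add: fine_partition_iff)
    have xs: "xs i = c" if "i \<le> n" for i
      using tagged_partition_points[OF P that] by simp
    show ?thesis
      unfolding p cell_sum_eq
    proof (intro sum.neutral ballI)
      fix i assume "i \<in> {1..n}"
      then have "xs i = c" "xs (i - 1) = c"
        using xs by auto
      then show "f (ts i) * (G (xs i) - G (xs (i - 1))) = 0"
        by simp
    qed
  qed
  then have "eventually (\<lambda>p. cell_sum f G p = 0) (fine_partitions c c)"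
    unfolding eventually_fine_partitions using nbhd_gauge_UNIV by blast
  then have "(cell_sum f G \<longlongrightarrow> 0) (fine_partitions c c)"
    by (rule tendsto_eventually)
  then show ?thesis
    unfolding has_RS_integral_iff_tendsto by simp
qed

lemma has_RS_integral_Cauchy:
  fixes c d :: "'a::linorder_topology"
  assumes compact: "compact (UNIV :: 'a set)" and dense: "\<And>x y::'a. x < y \<Longrightarrow> \<exists>z. x < z \<and> z < y"
    and "c \<le> d"
    and Cauchy: "\<And>e. e > 0 \<Longrightarrow> \<exists>\<delta>. nbhd_gauge c d \<delta> \<and>
      (\<forall>p p'. fine_partition c d \<delta> p \<and> fine_partition c d \<delta> p' \<longrightarrow> \<bar>cell_sum f G p - cell_sum f G p'\<bar> < e)"
  shows "has_RS_integral c d f G (RS_integral c d f G)"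
proof -
  have "cauchy_filter (filtermap (cell_sum f G) (fine_partitions c d))"
    unfolding cauchy_filter_metric_filtermap
  proof (intro allI impI)
    fix e :: real
    assume "e > 0"
    then obtain \<delta> where "nbhd_gauge c d \<delta>" and "\<forall>p p'. fine_partition c d \<delta> p \<and>
        fine_partition c d \<delta> p' \<longrightarrow> \<bar>cell_sum f G p - cell_sum f G p'\<bar> < e"
      using Cauchy by blast
    then show "\<exists>P. eventually P (fine_partitions c d) \<and>
        (\<forall>p p'. P p \<and> P p' \<longrightarrow> dist (cell_sum f G p) (cell_sum f G p') < e)"
      unfolding eventually_fine_partitions dist_real_def by (intro exI[of _ "fine_partition c d \<delta>"]) blast
  qed
  moreover have "filtermap (cell_sum f G) (fine_partitions c d) \<noteq> bot"
    using fine_partitions_neq_bot[OF compact dense \<open>c \<le> d\<close>] by (simp add: filtermap_bot_iff)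
  ultimately obtain L where "(cell_sum f G \<longlongrightarrow> L) (fine_partitions c d)"
    using cauchy_filter_complete_converges[OF _ complete_UNIV] unfolding filterlim_def by auto
  then have "has_RS_integral c d f G (L + f c * G c)"
    unfolding has_RS_integral_iff_tendsto by simp
  then show ?thesis
    using RS_integral_eqI[OF compact dense \<open>c \<le> d\<close>] by simp
qed

lemma has_RS_integral_subinterval:
  fixes c d :: "'a::linorder_topology"
  assumes compact: "compact (UNIV :: 'a set)" and dense: "\<And>x y::'a. x < y \<Longrightarrow> \<exists>z. x < z \<and> z < y"
    and A: "has_RS_integral c d f G A" and x: "x \<in> {c..d}"
  shows "has_RS_integral c x f G (RS_integral c x f G)"
proof (rule has_RS_integral_Cauchy[OF compact dense])
  show "c \<le> x"
    using x by simp
  fix e :: real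
  assume "e > 0"
  then obtain \<delta> where \<delta>: "nbhd_gauge c d \<delta>"
    and close: "\<And>p. fine_partition c d \<delta> p \<Longrightarrow> \<bar>cell_sum f G p - (A - f c * G c)\<bar> < e / 2"
    using A unfolding has_RS_integral_iff_tendsto tendsto_fine_partitions_iff
    by (meson half_gt_zero)
  have "nbhd_gauge x d \<delta>" "nbhd_gauge c x \<delta>"
    using nbhd_gauge_subinterval[OF \<delta>] x by auto
  then obtain q where q: "fine_partition x d \<delta> q"
    using fine_partition_exists[OF compact dense] x by (meson atLeastAtMost_iff)
  have half: "\<bar>cell_sum f G p - (A - f c * G c - cell_sum f G q)\<bar> < e / 2"
    if "fine_partition c x \<delta> p" for p
    using close[OF fine_partition_join[OF that q]] unfolding cell_sum_join[OF that q] by linarith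
  have "\<bar>cell_sum f G p - cell_sum f G p'\<bar> < e"
    if "fine_partition c x \<delta> p" "fine_partition c x \<delta> p'" for p p'
    using half[OF that(1)] half[OF that(2)] by linarith
  with \<open>nbhd_gauge c x \<delta>\<close> show "\<exists>\<delta>. nbhd_gauge c x \<delta> \<and> (\<forall>p p'. fine_partition c x \<delta> p \<and>
      fine_partition c x \<delta> p' \<longrightarrow> \<bar>cell_sum f G p - cell_sum f G p'\<bar> < e)"
    by blast
qed

section \<open>The Saks-Henstock lemma\<close>

lemma sum_abs_le_of_subset_sums:
  fixes x :: "'i \<Rightarrow> real"
  assumes "finite A" and subset_sums: "\<And>J. J \<subseteq> A \<Longrightarrow> \<bar>sum x J\<bar> \<le> \<epsilon>"
  shows "(\<Sum>i\<in>A. \<bar>x i\<bar>) \<le> 2 * \<epsilon>"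
proof -
  have "(\<Sum>i\<in>A. \<bar>x i\<bar>) = (\<Sum>i\<in>A. if 0 \<le> x i then x i else - x i)"
    by (rule sum.cong) auto
  also have "\<dots> = sum x (A \<inter> {i. 0 \<le> x i}) + sum (\<lambda>i. - x i) (A \<inter> - {i. 0 \<le> x i})"
    by (rule sum.If_cases) (fact assms(1))
  also have "\<dots> \<le> \<epsilon> + \<epsilon>"
    using subset_sums[of "A \<inter> {i. 0 \<le> x i}"] subset_sums[of "A \<inter> - {i. 0 \<le> x i}"]
    by (auto simp: sum_negf)
  finally show ?thesis
    by simp
qed

lemma fine_partition_replacing_cells:
  assumes P: "fine_partition a b \<delta> (n, xs, ts)" and "k \<le> n" and "0 < \<eta>"
    and approx: "\<And>u v. a \<le> u \<Longrightarrow> u \<le> v \<Longrightarrow> v \<le> b \<Longrightarrow>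
      \<exists>q. fine_partition u v \<delta> q \<and> \<bar>cell_sum h T q - (\<Phi> v - \<Phi> u)\<bar> < \<eta>"
  shows "\<exists>q. fine_partition a (xs k) \<delta> q \<and>
    \<bar>cell_sum h T q - (\<Sum>i=1..k. if i \<in> J then h (ts i) * (T (xs i) - T (xs (i - 1)))
                                   else \<Phi> (xs i) - \<Phi> (xs (i - 1)))\<bar> \<le> k * \<eta>"
  using \<open>k \<le> n\<close>
proof (induction k)
  case 0
  have "xs 0 = a"
    using P by (simp add: fine_partition_iff tagged_partition_def)
  then show ?case
    using fine_partition_point_partition[of a \<delta>] cell_sum_point_partition[of h T a]
    by (intro exI[of _ "point_partition a"]) simp
next
  case (Suc k)
  define cell where "cell i = (if i \<in> J then h (ts i) * (T (xs i) - T (xs (i - 1)))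
                               else \<Phi> (xs i) - \<Phi> (xs (i - 1)))" for i
  from Suc.IH[OF Suc_leD[OF Suc.prems]]
  obtain q where q: "fine_partition a (xs k) \<delta> q"
    and q_close: "\<bar>cell_sum h T q - (\<Sum>i=1..k. cell i)\<bar> \<le> k * \<eta>"
    unfolding cell_def by blast
  have "Suc k \<in> {1..n}"
    using Suc.prems by simp
  then have "xs (Suc k - 1) \<le> ts (Suc k) \<and> ts (Suc k) \<le> xs (Suc k)"
    "{xs (Suc k - 1)..xs (Suc k)} \<subseteq> \<delta> (ts (Suc k))"
    using P unfolding fine_partition_iff tagged_partition_def delta_fine_def by blast+
  then have cell_k: "xs k \<le> ts (Suc k)" "ts (Suc k) \<le> xs (Suc k)" "{xs k..xs (Suc k)} \<subseteq> \<delta> (ts (Suc k))"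
    by simp_all
  obtain r where r: "fine_partition (xs k) (xs (Suc k)) \<delta> r"
    and r_close: "\<bar>cell_sum h T r - cell (Suc k)\<bar> \<le> \<eta>"
  proof (cases "Suc k \<in> J")
    case True
    have "cell_sum h T (single_cell (xs k) (xs (Suc k)) (ts (Suc k))) = cell (Suc k)"
      using True by (simp add: cell_sum_single_cell cell_def)
    then show ?thesis
      using that[OF fine_partition_single_cell[where \<delta> = \<delta>, OF cell_k]] \<open>0 < \<eta>\<close> by simp
  next
    case False
    have "a \<le> xs k" "xs (Suc k) \<le> b"
      using P Suc.prems tagged_partition_points[of a b n xs ts] by (auto simp: fine_partition_iff)
    moreover have "xs k \<le> xs (Suc k)"
      using cell_k(1,2) by (rule order_trans)
    ultimately obtain r where "fine_partition (xs k) (xs (Suc k)) \<delta> r"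
      "\<bar>cell_sum h T r - (\<Phi> (xs (Suc k)) - \<Phi> (xs k))\<bar> < \<eta>"
      using approx by blast
    moreover have "cell (Suc k) = \<Phi> (xs (Suc k)) - \<Phi> (xs k)"
      using False by (simp add: cell_def)
    ultimately show ?thesis
      using that by simp
  qed
  have "fine_partition a (xs (Suc k)) \<delta> (join_partitions q r)"
    using fine_partition_join[OF q r] .
  moreover have "\<bar>cell_sum h T (join_partitions q r) - (\<Sum>i=1..Suc k. cell i)\<bar> \<le> Suc k * \<eta>"
    using q_close r_close unfolding cell_sum_join[OF q r] sum.cl_ivl_Suc
    by (simp add: algebra_simps abs_le_iff)
  ultimately show ?case
    unfolding cell_def by blast
qed

lemma saks_henstock:
  assumes P: "fine_partition a b \<delta> (n, xs, ts)" and J: "J \<subseteq> {1..n}"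
    and bound: "\<And>p. fine_partition a b \<delta> p \<Longrightarrow> \<bar>cell_sum h T p - (\<Phi> b - \<Phi> a)\<bar> < \<epsilon>"
    and approx: "\<And>u v \<eta>. a \<le> u \<Longrightarrow> u \<le> v \<Longrightarrow> v \<le> b \<Longrightarrow> \<eta> > 0 \<Longrightarrow>
      \<exists>q. fine_partition u v \<delta> q \<and> \<bar>cell_sum h T q - (\<Phi> v - \<Phi> u)\<bar> < \<eta>"
  shows "\<bar>\<Sum>i\<in>J. h (ts i) * (T (xs i) - T (xs (i - 1))) - (\<Phi> (xs i) - \<Phi> (xs (i - 1)))\<bar> \<le> \<epsilon>"
proof (rule field_le_epsilon)
  (* Replacing the cells outside J by fine partitions whose sums are within eta / (n + 1) of
     the increments of Phi yields a delta-fine partition of [a, b], to which bound applies. *)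
  fix \<eta> :: real
  assume "\<eta> > 0"
  define g where "g i = h (ts i) * (T (xs i) - T (xs (i - 1)))" for i
  define d where "d i = \<Phi> (xs i) - \<Phi> (xs (i - 1))" for i
  have "xs 0 = a" "xs n = b"
    using P by (auto simp: fine_partition_iff tagged_partition_def)
  have "\<eta> / (n + 1) > 0"
    using \<open>\<eta> > 0\<close> by simp
  from fine_partition_replacing_cells[OF P order_refl this approx[OF _ _ _ this], of J]
  obtain q where q: "fine_partition a b \<delta> q"
    and q_close: "\<bar>cell_sum h T q - (\<Sum>i=1..n. if i \<in> J then g i else d i)\<bar> \<le> n * (\<eta> / (n + 1))"
    unfolding g_def d_def \<open>xs n = b\<close> by blast
  have "n * (\<eta> / (n + 1)) \<le> \<eta>"
    using \<open>\<eta> > 0\<close> by (simp add: field_simps)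
  have "(\<Sum>i=1..n. d i) = \<Phi> b - \<Phi> a"
    using sum_telescope''[of 0 n "\<lambda>i. \<Phi> (xs i)"] \<open>xs 0 = a\<close> \<open>xs n = b\<close> by (simp add: d_def)
  then have "(\<Sum>i\<in>J. g i - d i) = (\<Sum>i=1..n. if i \<in> J then g i else d i) - (\<Phi> b - \<Phi> a)"
    using J by (simp add: sum.If_cases sum_subtractf Int_absorb1 Diff_eq[symmetric] sum_diff)
  then have "\<bar>\<Sum>i\<in>J. g i - d i\<bar> \<le> \<epsilon> + \<eta>"
    using q_close bound[OF q] \<open>n * (\<eta> / (n + 1)) \<le> \<eta>\<close> by linarith
  then show "\<bar>\<Sum>i\<in>J. h (ts i) * (T (xs i) - T (xs (i - 1))) - (\<Phi> (xs i) - \<Phi> (xs (i - 1)))\<bar> \<le> \<epsilon> + \<eta>"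
    by (simp add: g_def d_def)
qed

lemma fine_partition_approx_increment:
  fixes a b :: "'a::linorder_topology"
  assumes compact: "compact (UNIV :: 'a set)" and dense: "\<And>x y::'a. x < y \<Longrightarrow> \<exists>z. x < z \<and> z < y"
    and prim: "\<And>x. x \<in> {a..b} \<Longrightarrow> (cell_sum h T \<longlongrightarrow> \<Phi> x - \<Phi> a) (fine_partitions a x)"
    and \<delta>: "nbhd_gauge a b \<delta>" and uv: "a \<le> u" "u \<le> v" "v \<le> b" and "\<eta> > 0"
  shows "\<exists>q. fine_partition u v \<delta> q \<and> \<bar>cell_sum h T q - (\<Phi> v - \<Phi> u)\<bar> < \<eta>"
proof -
  obtain \<delta>u where \<delta>u: "nbhd_gauge a u \<delta>u"
    and close_u: "\<And>p. fine_partition a u \<delta>u p \<Longrightarrow> \<bar>cell_sum h T p - (\<Phi> u - \<Phi> a)\<bar> < \<eta> / 2"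
    using prim[of u] uv \<open>\<eta> > 0\<close> unfolding tendsto_fine_partitions_iff by (meson atLeastAtMost_iff half_gt_zero order_trans)
  obtain \<delta>v where \<delta>v: "nbhd_gauge a v \<delta>v"
    and close_v: "\<And>p. fine_partition a v \<delta>v p \<Longrightarrow> \<bar>cell_sum h T p - (\<Phi> v - \<Phi> a)\<bar> < \<eta> / 2"
    using prim[of v] uv \<open>\<eta> > 0\<close> unfolding tendsto_fine_partitions_iff by (meson atLeastAtMost_iff half_gt_zero order_trans)
  have "nbhd_gauge a u (\<lambda>t. \<delta>u t \<inter> \<delta>v t)"
    using \<delta>u nbhd_gauge_subinterval[OF \<delta>v order_refl uv(2)] by (rule nbhd_gauge_Int)
  then obtain p where p: "fine_partition a u \<delta>u p" "fine_partition a u \<delta>v p"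
    using fine_partition_exists[OF compact dense uv(1)] fine_partition_Int_gauge by metis
  have "nbhd_gauge u v (\<lambda>t. \<delta> t \<inter> \<delta>v t)"
    using nbhd_gauge_subinterval[OF \<delta> uv(1,3)] nbhd_gauge_subinterval[OF \<delta>v uv(1) order_refl]
    by (rule nbhd_gauge_Int)
  then obtain q where q: "fine_partition u v \<delta> q" "fine_partition u v \<delta>v q"
    using fine_partition_exists[OF compact dense uv(2)] fine_partition_Int_gauge by metis
  have "\<bar>cell_sum h T p + cell_sum h T q - (\<Phi> v - \<Phi> a)\<bar> < \<eta> / 2"
    using close_v[OF fine_partition_join[OF p(2) q(2)]] cell_sum_join[OF p(2) q(2)] by simp
  then have "\<bar>cell_sum h T q - (\<Phi> v - \<Phi> u)\<bar> < \<eta>"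
    using close_u[OF p(1)] by linarith
  then show ?thesis
    using q(1) by blast
qed

section \<open>Integration against an indefinite integral\<close>

lemma tendsto_cell_sum_primitive_diff:
  fixes a b :: "'a::linorder_topology"
  assumes compact: "compact (UNIV :: 'a set)" and dense: "\<And>x y::'a. x < y \<Longrightarrow> \<exists>z. x < z \<and> z < y"
    and "a \<le> b"
    and prim: "\<And>x. x \<in> {a..b} \<Longrightarrow> (cell_sum h T \<longlongrightarrow> \<Phi> x - \<Phi> a) (fine_partitions a x)"
    and f_bound: "\<And>x. \<bar>f x\<bar> \<le> M"
  shows "((\<lambda>p. cell_sum f \<Phi> p - cell_sum (\<lambda>x. f x * h x) T p) \<longlongrightarrow> 0) (fine_partitions a b)"
  unfolding tendsto_fine_partitions_iff
proof (intro allI impI)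
  fix e :: real
  assume "e > 0"
  have "M \<ge> 0"
    using f_bound[of a] by linarith
  define \<epsilon> where "\<epsilon> = e / (2 * M + 1)"
  have "\<epsilon> > 0" "M * (2 * \<epsilon>) < e"
    using \<open>e > 0\<close> \<open>M \<ge> 0\<close> by (auto simp: \<epsilon>_def field_simps)
  then obtain \<delta> where \<delta>: "nbhd_gauge a b \<delta>"
    and bound: "\<And>p. fine_partition a b \<delta> p \<Longrightarrow> \<bar>cell_sum h T p - (\<Phi> b - \<Phi> a)\<bar> < \<epsilon>"
    using prim[of b] \<open>a \<le> b\<close> unfolding tendsto_fine_partitions_iff by auto
  have "\<bar>cell_sum f \<Phi> p - cell_sum (\<lambda>x. f x * h x) T p - 0\<bar> < e"
    if "fine_partition a b \<delta> p" for p
  proof -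
    obtain n xs ts where p: "p = (n, xs, ts)"
      by (cases p)
    define x where "x i = h (ts i) * (T (xs i) - T (xs (i - 1))) - (\<Phi> (xs i) - \<Phi> (xs (i - 1)))" for i
    have "(\<Sum>i=1..n. \<bar>x i\<bar>) \<le> 2 * \<epsilon>"
      unfolding x_def
      by (intro sum_abs_le_of_subset_sums saks_henstock[OF that[unfolded p] _ bound]
          fine_partition_approx_increment[OF compact dense prim \<delta>]) auto
    have "\<bar>cell_sum f \<Phi> p - cell_sum (\<lambda>x. f x * h x) T p\<bar> =
        \<bar>cell_sum (\<lambda>x. f x * h x) T p - cell_sum f \<Phi> p\<bar>"
      by (rule abs_minus_commute)
    also have "\<dots> = \<bar>\<Sum>i=1..n. f (ts i) * x i\<bar>"
      unfolding p cell_sum_eq x_def sum_subtractf[symmetric] by (simp add: algebra_simps)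
    also have "\<dots> \<le> (\<Sum>i=1..n. M * \<bar>x i\<bar>)"
      by (intro order_trans[OF sum_abs] sum_mono) (simp add: abs_mult f_bound mult_right_mono)
    also have "\<dots> \<le> M * (2 * \<epsilon>)"
      using \<open>(\<Sum>i=1..n. \<bar>x i\<bar>) \<le> 2 * \<epsilon>\<close> \<open>M \<ge> 0\<close> by (simp add: sum_distrib_left[symmetric] mult_left_mono)
    finally show ?thesis
      using \<open>M * (2 * \<epsilon>) < e\<close> by simp
  qed
  then show "\<exists>\<delta>. nbhd_gauge a b \<delta> \<and> (\<forall>p. fine_partition a b \<delta> p \<longrightarrow>
      \<bar>cell_sum f \<Phi> p - cell_sum (\<lambda>x. f x * h x) T p - 0\<bar> < e)"
    using \<delta> by blast
qed

lemma has_RS_integral_indefinite_integral_iff: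
  fixes a b :: "'a::linorder_topology"
  assumes compact: "compact (UNIV :: 'a set)" and dense: "\<And>x y::'a. x < y \<Longrightarrow> \<exists>z. x < z \<and> z < y"
    and "a \<le> b"
    and \<Phi>: "\<And>x. x \<in> {a..b} \<Longrightarrow> has_RS_integral a x h T (\<Phi> x)"
    and f_bound: "\<And>x. \<bar>f x\<bar> \<le> M"
  shows "has_RS_integral a b f \<Phi> A \<longleftrightarrow> has_RS_integral a b (\<lambda>x. f x * h x) T A"
proof -
  have "\<Phi> a = h a * T a"
    using RS_integral_eqI[OF compact dense order_refl] \<Phi>[of a] has_RS_integral_point \<open>a \<le> b\<close>
    by (metis atLeastAtMost_iff order_refl)
  then have prim: "(cell_sum h T \<longlongrightarrow> \<Phi> x - \<Phi> a) (fine_partitions a x)" if "x \<in> {a..b}" for x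
    using \<Phi>[OF that] unfolding has_RS_integral_iff_tendsto by simp
  have diff: "((\<lambda>p. cell_sum f \<Phi> p - cell_sum (\<lambda>x. f x * h x) T p) \<longlongrightarrow> 0) (fine_partitions a b)"
    by (rule tendsto_cell_sum_primitive_diff[OF compact dense \<open>a \<le> b\<close> prim f_bound])
  show ?thesis
    unfolding has_RS_integral_iff_tendsto \<open>\<Phi> a = h a * T a\<close> mult.assoc
    using Lim_transform[OF _ diff] Lim_transform2[OF _ diff] by blast
qed

(* A partition must have a cell reaching from below s to above u; no gauge interval of
   the gauge below contains both s and u. *)
lemma has_RS_integral_gap:
  assumes "a \<le> s" "s < u" "u \<le> b" and gap: "\<And>z. \<not> (s < z \<and> z < u)"
  shows "has_RS_integral a b f G A"
proof -
  define \<delta> where "\<delta> t = (if t \<le> s then {a..<u} else {s<..b})" for t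
  have "s \<in> {a..b}" "u \<in> {a..b}"
    using assms(1-3) by auto
  then have "open_interval_in a b {a..<u}" "open_interval_in a b {s<..b}"
    unfolding open_interval_in_def by blast+
  then have "gauge_on a b \<delta>"
    using assms(2) unfolding gauge_on_def \<delta>_def by (auto intro: le_less_trans)
  moreover have "\<not> (tagged_partition a b n xs ts \<and> delta_fine \<delta> n xs ts)" for n xs ts
  proof
    assume P: "tagged_partition a b n xs ts \<and> delta_fine \<delta> n xs ts"
    then have "s < xs n"
      using assms by (auto simp: tagged_partition_def)
    define i where "i = (LEAST i. s < xs i)"
    have "s < xs i" "i \<le> n"
      unfolding i_def using LeastI[of "\<lambda>i. s < xs i"] Least_le[of "\<lambda>i. s < xs i"] \<open>s < xs n\<close> by auto
    moreover have "i \<noteq> 0"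
      using \<open>s < xs i\<close> P assms(1) by (metis tagged_partition_def not_le)
    moreover have "xs (i - 1) \<le> s"
      using not_less_Least[of "i - 1" "\<lambda>i. s < xs i"] \<open>i \<noteq> 0\<close> unfolding i_def[symmetric] by simp
    moreover have "u \<le> xs i"
      using gap \<open>s < xs i\<close> by (meson not_le)
    ultimately have "s \<in> \<delta> (ts i)" "u \<in> \<delta> (ts i)"
      using P \<open>s < u\<close> unfolding delta_fine_def by (auto dest!: bspec[of _ _ i])
    then show False
      unfolding \<delta>_def by (auto split: if_splits)
  qed
  ultimately show ?thesis
    unfolding has_RS_integral_def by blast
qed

theorem lemma6p8:
  fixes a b :: "'a::linorder_topology"
    and T h f :: "'a \<Rightarrow> real"
  assumes K_compact: "compact (UNIV :: 'a set)"
    and K_bounds: "\<forall>x. a \<le> x \<and> x \<le> b"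
    and a_lt_b: "a < b"
    and T_mono: "mono T"
    and T_rcont: "\<forall>x. (T \<longlongrightarrow> T x) (at_right x)"
    and h_int: "RS_integrable a b h T"
    and f_bdd: "bounded (range f)"
  shows "(RS_integrable a b f (\<lambda>x. RS_integral a x h T)
            \<longleftrightarrow> RS_integrable a b (\<lambda>x. f x * h x) T)
       \<and> (RS_integrable a b (\<lambda>x. f x * h x) T \<longrightarrow>
            RS_integral a b f (\<lambda>x. RS_integral a x h T)
              = RS_integral a b (\<lambda>x. f x * h x) T)"
proof -
  define \<Phi> where "\<Phi> x = RS_integral a x h T" for x
  have "has_RS_integral a b f \<Phi> = has_RS_integral a b (\<lambda>x. f x * h x) T"
  proof (cases "\<forall>x y::'a. x < y \<longrightarrow> (\<exists>z. x < z \<and> z < y)")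
    case True
    note dense = True[rule_format]
    obtain A where "has_RS_integral a b h T A"
      using h_int unfolding RS_integrable_def by blast
    then have "has_RS_integral a x h T (\<Phi> x)" if "x \<in> {a..b}" for x
      using has_RS_integral_subinterval[OF K_compact dense _ that] unfolding \<Phi>_def by blast
    moreover obtain M where "\<And>x. \<bar>f x\<bar> \<le> M"
      using f_bdd unfolding bounded_iff by auto
    ultimately show ?thesis
      using has_RS_integral_indefinite_integral_iff[OF K_compact dense less_imp_le[OF a_lt_b]] by blast
  next
    case False
    then obtain s u :: 'a where "s < u" "\<And>z. \<not> (s < z \<and> z < u)"
      by blast
    then have "has_RS_integral a b F G = (\<lambda>_. True)" for F G :: "'a \<Rightarrow> real"
      using has_RS_integral_gap K_bounds by blast
    then show ?thesis
      by simp
  qed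
  (* Equal predicates have equal THE-values, also where the integral is not unique. *)
  then show ?thesis
    unfolding RS_integrable_def RS_integral_def \<Phi>_def by simp
qed

end
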